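(* Let $\mathcal C\subseteq\{0,1\}^n$ and $\mathcal D\subseteq\{0,1\}^m$ be neural codes and let $\phi:R_\mathcal D\to R_\mathcal C$ be a ring homomorphism. Then $\phi$ is a neural ring homomorphism if and only if the associated code map $q_\phi:\mathcal C\to\mathcal D$ is a composition of code maps of the following types (each between neural codes): 1. Permutation of labels: for a code $\mathcal A\subseteq\{0,1\}^k$ and a permutation $\sigma$ of $[k]$, the map $\mathcal A\to\mathcal A'$, $(a_1,\dots,a_k)\mapsto(a_{\sigma(1)},\dots,a_{\sigma(k)})$, where $\mathcal A'$ is the image of $\mathcal A$; 2. Adding codewords (inclusion): for codes $\mathcal A\subseteq\mathcal A'\subseteq\{0,1\}^k$, the map $\mathcal A\to\mathcal A'$, $a\mapsto a$; 3. Deleting the last neuron: $\mathcal A\to\mathcal A'$, $(a_1,\dots,a_k)\mapsto(a_1,\dots,a_{k-1})$, where $\mathcal A'$ is the image; 4. Repeating a neuron: for some $i\in[k]$, $\mathcal A\to\mathcal A'$, $(a_1,\dots,a_k)\mapsto(a_1,\dots,a_k,a_i)$, where $\mathcal A'$ is the image; 5. Adding a trivial neuron: $\mathcal A\to\mathcal A'$, $(a_1,\dots,a_k)\mapsto(a_1,\dots,a_k,0)$ for all $a$, or $(a_1,\dots,a_k)\mapsto(a_1,\dots,a_k,1)$ for all $a$, where $\mathcal A'$ is the image.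
   Context: For a code $\mathcal C\subseteq\{0,1\}^n$, $R_\mathcal C$ is the ring of all functions $\mathcal C\to\mathbb F_2$ (equivalently $\mathbb F_2[x_1,\dots,x_n]$ modulo the ideal of polynomials vanishing on $\mathcal C$), and $R[n]=R_{\{0,1\}^n}=\mathbb F_2[x_1,\dots,x_n]/\langle x_i^2-x_i\rangle$. $R_\mathcal C$ is an $R[n]$-module via $(r\cdot f)(c)=r(c)f(c)$. For $c\in\mathcal C$, $\rho_c\in R_\mathcal C$ is the indicator function of $\{c\}$. For a ring homomorphism $\phi:R_\mathcal D\to R_\mathcal C$ and $c\in\mathcal C$ there is a unique $d\in\mathcal D$ with $\phi(\rho_d)(c)=1$; the associated code map is $q_\phi(c)=$ this $d$. A ring homomorphism $\tau:R[m]\to R[n]$ is compatible with $\phi$ if $\phi(r\cdot f)=\tau(r)\cdot\phi(f)$ for all $r\in R[m]$, $f\in R_\mathcal D$. A ring homomorphism $\tau:R[m]\to R[n]$ is linear-monomial if $\tau(x_i)\in\{x_1,\dots,x_n,0,1\}$ for every $i\in[m]$. A ring homomorphism $\phi:R_\mathcal D\to R_\mathcal C$ is a neural ring homomorphism if there exists a linear-monomial ring homomorphism $\tau:R[m]\to R[n]$ compatible with $\phi$. *)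

theory Defs
  imports "HOL-Algebra.Ring" "HOL-Combinatorics.Permutations"
begin

text \<open>Codewords in {0,1}^n are boolean lists of length n; F_2 is rendered as bool
  (addition = exclusive or, multiplication = conjunction). Neurons are indexed 0..n-1.\<close>

definition cube :: "nat \<Rightarrow> bool list set" where
  "cube n = {xs. length xs = n}"

text \<open>R_C: the ring of all functions C \<rightarrow> F_2, represented as functions on all lists
  that vanish outside C.\<close>
definition code_ring :: "bool list set \<Rightarrow> (bool list \<Rightarrow> bool) ring" where
  "code_ring C = \<lparr> carrier = {f. \<forall>x. x \<notin> C \<longrightarrow> f x = False},
                   monoid.mult = (\<lambda>f g x. f x \<and> g x),
                   one = (\<lambda>x. x \<in> C),
                   zero = (\<lambda>x. False),
                   add = (\<lambda>f g x. f x \<noteq> g x) \<rparr>"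

abbreviation poly_ring :: "nat \<Rightarrow> (bool list \<Rightarrow> bool) ring" where
  "poly_ring n \<equiv> code_ring (cube n)"

text \<open>The variable x_(i+1) of R[n] (0-based index i).\<close>
definition var :: "nat \<Rightarrow> nat \<Rightarrow> bool list \<Rightarrow> bool" where
  "var n i = (\<lambda>c. c \<in> cube n \<and> c ! i)"

definition act :: "(bool list \<Rightarrow> bool) \<Rightarrow> (bool list \<Rightarrow> bool) \<Rightarrow> bool list \<Rightarrow> bool" where
  "act r f = (\<lambda>c. r c \<and> f c)"

definition rho :: "bool list \<Rightarrow> bool list \<Rightarrow> bool" where
  "rho c = (\<lambda>x. x = c)"

definition code_map :: "bool list set \<Rightarrow> ((bool list \<Rightarrow> bool) \<Rightarrow> (bool list \<Rightarrow> bool))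
    \<Rightarrow> bool list \<Rightarrow> bool list" where
  "code_map D \<phi> c = (THE d. d \<in> D \<and> \<phi> (rho d) c)"

definition compatible :: "nat \<Rightarrow> bool list set \<Rightarrow> bool list set
    \<Rightarrow> ((bool list \<Rightarrow> bool) \<Rightarrow> (bool list \<Rightarrow> bool))
    \<Rightarrow> ((bool list \<Rightarrow> bool) \<Rightarrow> (bool list \<Rightarrow> bool)) \<Rightarrow> bool" where
  "compatible m D C \<tau> \<phi> \<longleftrightarrow>
     (\<forall>r \<in> carrier (poly_ring m). \<forall>f \<in> carrier (code_ring D).
        \<phi> (act r f) = act (\<tau> r) (\<phi> f))"

definition linear_monomial :: "nat \<Rightarrow> nat \<Rightarrow> ((bool list \<Rightarrow> bool) \<Rightarrow> (bool list \<Rightarrow> bool)) \<Rightarrow> bool" where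
  "linear_monomial m n \<tau> \<longleftrightarrow>
     \<tau> \<in> ring_hom (poly_ring m) (poly_ring n) \<and>
     (\<forall>i < m. \<tau> (var m i) \<in> {var n j | j. j < n} \<union>
                 {\<zero>\<^bsub>poly_ring n\<^esub>, \<one>\<^bsub>poly_ring n\<^esub>})"

definition neural_ring_hom :: "nat \<Rightarrow> bool list set \<Rightarrow> nat \<Rightarrow> bool list set
    \<Rightarrow> ((bool list \<Rightarrow> bool) \<Rightarrow> (bool list \<Rightarrow> bool)) \<Rightarrow> bool" where
  "neural_ring_hom n C m D \<phi> \<longleftrightarrow>
     \<phi> \<in> ring_hom (code_ring D) (code_ring C) \<and>
     (\<exists>\<tau>. linear_monomial m n \<tau> \<and> compatible m D C \<tau> \<phi>)"

inductive elementary :: "nat \<Rightarrow> bool list set \<Rightarrow> nat \<Rightarrow> bool list set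
    \<Rightarrow> (bool list \<Rightarrow> bool list) \<Rightarrow> bool" where
  permute: "A \<subseteq> cube k \<Longrightarrow> \<sigma> permutes {..<k} \<Longrightarrow>
     elementary k A k ((\<lambda>a. map (\<lambda>i. a ! \<sigma> i) [0..<k]) ` A) (\<lambda>a. map (\<lambda>i. a ! \<sigma> i) [0..<k])"
| inclusion: "A \<subseteq> B \<Longrightarrow> B \<subseteq> cube k \<Longrightarrow> elementary k A k B id"
| delete_last: "A \<subseteq> cube k \<Longrightarrow> k \<ge> 1 \<Longrightarrow> elementary k A (k - 1) (butlast ` A) butlast"
| repeat: "A \<subseteq> cube k \<Longrightarrow> i < k \<Longrightarrow>
     elementary k A (k + 1) ((\<lambda>a. a @ [a ! i]) ` A) (\<lambda>a. a @ [a ! i])"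
| add_trivial: "A \<subseteq> cube k \<Longrightarrow>
     elementary k A (k + 1) ((\<lambda>a. a @ [b]) ` A) (\<lambda>a. a @ [b])"

inductive composite :: "nat \<Rightarrow> bool list set \<Rightarrow> nat \<Rightarrow> bool list set
    \<Rightarrow> (bool list \<Rightarrow> bool list) \<Rightarrow> bool" where
  single: "elementary k A l B f \<Longrightarrow> composite k A l B f"
| step: "composite k A l B f \<Longrightarrow> elementary l B p E g \<Longrightarrow> composite k A p E (g \<circ> f)"

end

theory Submission
  imports Defs
begin

text \<open>A ring homomorphism \<open>\<phi> : R\<^sub>D \<rightarrow> R\<^sub>C\<close> is pullback along its code map \<open>q\<^sub>\<phi>\<close>, because every
  \<open>f \<in> R\<^sub>D\<close> is a finite sum of orthogonal idempotents \<open>\<rho>\<^sub>d\<close>. Compatibility with a linear-monomial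
  \<open>\<tau>\<close> then says \<open>\<tau>(x\<^sub>i)(c) = q\<^sub>\<phi>(c)\<^sub>i\<close> on \<open>C\<close>, so \<open>\<phi>\<close> is neural exactly when every coordinate
  of \<open>q\<^sub>\<phi>\<close> is a literal: an input coordinate or a constant. Maps of this shape are closed under
  composition and contain the five elementary maps; conversely such a map is obtained by appending
  its literal coordinates one at a time (repeating a neuron or adding a trivial one), rotating
  them to the front, deleting the original neurons, and finally including the image into \<open>D\<close>.\<close>

section \<open>Literal maps\<close>

text \<open>A literal is either an input coordinate \<open>Inl j\<close> or a constant \<open>Inr b\<close>.\<close>

definition lit_val :: "nat + bool \<Rightarrow> bool list \<Rightarrow> bool" where
  "lit_val l a = (case l of Inl j \<Rightarrow> a ! j | Inr b \<Rightarrow> b)"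

definition lits_below :: "nat \<Rightarrow> nat \<Rightarrow> (nat \<Rightarrow> nat + bool) \<Rightarrow> bool" where
  "lits_below k l s \<longleftrightarrow> (\<forall>i<l. \<forall>j. s i = Inl j \<longrightarrow> j < k)"

definition lit_map :: "nat \<Rightarrow> (nat \<Rightarrow> nat + bool) \<Rightarrow> bool list \<Rightarrow> bool list" where
  "lit_map l s a = map (\<lambda>i. lit_val (s i) a) [0..<l]"

definition lit_comp :: "(nat \<Rightarrow> nat + bool) \<Rightarrow> (nat \<Rightarrow> nat + bool) \<Rightarrow> nat \<Rightarrow> nat + bool" where
  "lit_comp s t i = (case t i of Inl j \<Rightarrow> s j | Inr b \<Rightarrow> Inr b)"

definition lit_map_on :: "nat \<Rightarrow> nat \<Rightarrow> bool list set \<Rightarrow> (bool list \<Rightarrow> bool list) \<Rightarrow> bool" where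
  "lit_map_on k l A f \<longleftrightarrow> (\<exists>s. lits_below k l s \<and> (\<forall>a\<in>A. f a = lit_map l s a))"

lemma length_lit_map [simp]: "length (lit_map l s a) = l"
  by (simp add: lit_map_def)

lemma nth_lit_map [simp]: "i < l \<Longrightarrow> lit_map l s a ! i = lit_val (s i) a"
  by (simp add: lit_map_def)

lemma lit_map_Suc: "lit_map (Suc l) s a = lit_map l s a @ [lit_val (s l) a]"
  by (simp add: lit_map_def)

lemma lit_val_append:
  "(\<forall>j. l = Inl j \<longrightarrow> j < length a) \<Longrightarrow> lit_val l (a @ b) = lit_val l a"
  by (cases l) (auto simp: lit_val_def nth_append)

lemma lits_below_lit_comp:
  "lits_below k l s \<Longrightarrow> lits_below l p t \<Longrightarrow> lits_below k p (lit_comp s t)"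
  by (auto simp: lits_below_def lit_comp_def split: sum.splits)

lemma lit_map_lit_comp:
  assumes "lits_below l p t"
  shows "lit_map p t (lit_map l s a) = lit_map p (lit_comp s t) a"
proof (rule nth_equalityI)
  fix i assume "i < length (lit_map p t (lit_map l s a))"
  with assms show "lit_map p t (lit_map l s a) ! i = lit_map p (lit_comp s t) a ! i"
    by (cases "t i") (auto simp: lits_below_def lit_comp_def lit_val_def)
qed simp

lemma lit_map_on_comp:
  assumes "lit_map_on k l A f" "lit_map_on l p B g" "f ` A \<subseteq> B"
  shows "lit_map_on k p A (g \<circ> f)"
proof -
  obtain s where s: "lits_below k l s" "\<forall>a\<in>A. f a = lit_map l s a"
    using assms(1) by (auto simp: lit_map_on_def)
  obtain t where t: "lits_below l p t" "\<forall>b\<in>B. g b = lit_map p t b"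
    using assms(2) by (auto simp: lit_map_on_def)
  have "(g \<circ> f) a = lit_map p (lit_comp s t) a" if "a \<in> A" for a
    using that s(2) t assms(3) by (auto simp: lit_map_lit_comp)
  then show ?thesis
    using lits_below_lit_comp[OF s(1) t(1)] by (auto simp: lit_map_on_def)
qed

lemma lit_map_Inl: "l \<le> length a \<Longrightarrow> lit_map l Inl a = take l a"
  by (rule nth_equalityI) (auto simp: lit_val_def)

lemma lit_map_cong: "(\<And>i. i < l \<Longrightarrow> s i = t i) \<Longrightarrow> lit_map l s a = lit_map l t a"
  by (simp add: lit_map_def)

lemma lit_map_on_append_lit:
  assumes "A \<subseteq> cube k" "\<forall>j. l = Inl j \<longrightarrow> j < k"
  shows "lit_map_on k (k + 1) A (\<lambda>a. a @ [lit_val l a])"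
proof -
  have "a @ [lit_val l a] = lit_map (k + 1) (Inl(k := l)) a" if "a \<in> A" for a
  proof -
    have "lit_map k (Inl(k := l)) a = lit_map k Inl a" by (rule lit_map_cong) simp
    moreover have "length a = k" using that assms(1) by (auto simp: cube_def)
    ultimately show ?thesis by (simp add: lit_map_Suc lit_map_Inl)
  qed
  moreover have "lits_below k (k + 1) (Inl(k := l))" using assms(2) by (auto simp: lits_below_def)
  ultimately show ?thesis unfolding lit_map_on_def by blast
qed

section \<open>Composites of elementary code maps\<close>

lemma elementary_codes:
  "elementary k A l B f \<Longrightarrow> A \<subseteq> cube k \<and> B \<subseteq> cube l \<and> f ` A \<subseteq> B"
  by (induction rule: elementary.induct) (auto simp: cube_def)

lemma composite_codes:
  "composite k A l B f \<Longrightarrow> A \<subseteq> cube k \<and> B \<subseteq> cube l \<and> f ` A \<subseteq> B"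
  by (induction rule: composite.induct) (use elementary_codes in fastforce)+

lemma elementary_lit_map_on:
  assumes "elementary k A l B f"
  shows "lit_map_on k l A f"
  using assms
proof cases
  case (permute \<sigma>)
  then have "\<forall>i<k. \<sigma> i < k" using permutes_in_image by fastforce
  with permute show ?thesis
    by (auto simp: lit_map_on_def lits_below_def lit_map_def lit_val_def
        intro!: exI[of _ "\<lambda>i. Inl (\<sigma> i)"])
next
  case inclusion
  then show ?thesis
    by (auto simp: lit_map_on_def lits_below_def lit_map_Inl cube_def intro!: exI[of _ Inl])
next
  case delete_last
  then show ?thesis
    by (auto simp: lit_map_on_def lits_below_def lit_map_Inl cube_def butlast_conv_take
        intro!: exI[of _ Inl])
next
  case (repeat i)
  then show ?thesis using lit_map_on_append_lit[of A k "Inl i"] by (simp add: lit_val_def)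
next
  case (add_trivial b)
  then show ?thesis using lit_map_on_append_lit[of A k "Inr b"] by (simp add: lit_val_def)
qed

lemma composite_lit_map_on: "composite k A l B f \<Longrightarrow> lit_map_on k l A f"
proof (induction rule: composite.induct)
  case (single k A l B f)
  then show ?case by (rule elementary_lit_map_on)
next
  case (step k A l B f p E g)
  show ?case
    by (rule lit_map_on_comp[OF step.IH elementary_lit_map_on[OF step(2)]])
      (use composite_codes[OF step(1)] in blast)
qed

lemma composite_trans:
  "composite l B p E g \<Longrightarrow> composite k A l B f \<Longrightarrow> composite k A p E (g \<circ> f)"
proof (induction l B p E g rule: composite.induct)
  case (single l B p E g)
  show ?case by (rule composite.step[OF single.prems single.hyps])
next
  case (step l B p E g q F h)
  from step.IH[OF step.prems] have "composite k A p E (g \<circ> f)" .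
  from composite.step[OF this step(2)] show ?case by (simp only: comp_assoc)
qed

definition composite_map ::
    "nat \<Rightarrow> bool list set \<Rightarrow> nat \<Rightarrow> bool list set \<Rightarrow> (bool list \<Rightarrow> bool list) \<Rightarrow> bool" where
  "composite_map k A l B f \<longleftrightarrow> (\<exists>g. composite k A l B g \<and> (\<forall>a\<in>A. g a = f a))"

lemma composite_map_cong:
  "composite_map k A l B f \<Longrightarrow> (\<And>a. a \<in> A \<Longrightarrow> f a = h a) \<Longrightarrow> composite_map k A l B h"
  by (auto simp: composite_map_def)

lemma composite_map_image_cong:
  assumes "composite_map k A l (f ` A) f" "\<And>a. a \<in> A \<Longrightarrow> f a = h a"
  shows "composite_map k A l (h ` A) h"
proof -
  have "f ` A = h ` A" using assms(2) by (rule image_cong[OF refl])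
  with assms(1) have "composite_map k A l (h ` A) f" by simp
  then show ?thesis using assms(2) by (rule composite_map_cong)
qed

lemma elementary_composite_map: "elementary k A l B f \<Longrightarrow> composite_map k A l B f"
  by (auto simp: composite_map_def intro: composite.single)

lemma composite_map_id: "A \<subseteq> cube k \<Longrightarrow> composite_map k A k A id"
  by (rule elementary_composite_map, rule elementary.inclusion) auto

lemma composite_map_comp:
  assumes f: "composite_map k A l B f" and g: "composite_map l B p E g"
  shows "composite_map k A p E (g \<circ> f)"
proof -
  obtain f' where f': "composite k A l B f'" "\<forall>a\<in>A. f' a = f a"
    using f by (auto simp: composite_map_def)
  obtain g' where g': "composite l B p E g'" "\<forall>b\<in>B. g' b = g b"
    using g by (auto simp: composite_map_def)
  have "\<forall>a\<in>A. (g' \<circ> f') a = (g \<circ> f) a"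
    using f' g' composite_codes[OF f'(1)] by auto
  with composite_trans[OF g'(1) f'(1)] show ?thesis
    by (auto simp: composite_map_def)
qed

lemma composite_map_image_comp:
  "composite_map k A l (f ` A) f \<Longrightarrow> composite_map l (f ` A) p (g ` f ` A) g \<Longrightarrow>
   composite_map k A p ((g \<circ> f) ` A) (g \<circ> f)"
  unfolding image_comp[symmetric] by (rule composite_map_comp)

lemma elementary_append_lit:
  assumes "A \<subseteq> cube k" "\<forall>j. l = Inl j \<longrightarrow> j < k"
  shows "elementary k A (k + 1) ((\<lambda>a. a @ [lit_val l a]) ` A) (\<lambda>a. a @ [lit_val l a])"
  using assms elementary.repeat[of A k] elementary.add_trivial[of A k]
  by (cases l) (auto simp: lit_val_def)

lemma composite_map_append_lits:
  assumes C: "C \<subseteq> cube n"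
  shows "lits_below n t s \<Longrightarrow>
    composite_map n C (n + t) ((\<lambda>a. a @ lit_map t s a) ` C) (\<lambda>a. a @ lit_map t s a)"
proof (induction t)
  case 0
  then show ?case
    using composite_map_image_cong[of n C n id] composite_map_id[OF C] by (simp add: lit_map_def)
next
  case (Suc t)
  let ?h = "\<lambda>a. a @ lit_map t s a" and ?e = "\<lambda>x. x @ [lit_val (s t) x]"
  have below: "lits_below n t s" "\<forall>j. s t = Inl j \<longrightarrow> j < n"
    using Suc.prems by (auto simp: lits_below_def less_Suc_eq)
  have hC: "?h ` C \<subseteq> cube (n + t)" using C by (auto simp: cube_def)
  have "\<forall>j. s t = Inl j \<longrightarrow> j < n + t" using below(2) by auto
  then have "composite_map (n + t) (?h ` C) (n + Suc t) (?e ` ?h ` C) ?e"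
    using elementary_composite_map[OF elementary_append_lit[OF hC]] by simp
  then have "composite_map n C (n + Suc t) ((?e \<circ> ?h) ` C) (?e \<circ> ?h)"
    by (rule composite_map_image_comp[OF Suc.IH[OF below(1)]])
  moreover have "(?e \<circ> ?h) a = a @ lit_map (Suc t) s a" if "a \<in> C" for a
    using that C below(2) by (auto simp: lit_map_Suc lit_val_append cube_def)
  ultimately show ?case by (rule composite_map_image_cong)
qed

lemma composite_map_take:
  "A \<subseteq> cube (k + t) \<Longrightarrow> composite_map (k + t) A k (take k ` A) (take k)"
proof (induction t arbitrary: A)
  case 0
  then have "composite_map k A k (id ` A) id" using composite_map_id by simp
  then have "composite_map k A k (take k ` A) (take k)"
    by (rule composite_map_image_cong) (use 0 in \<open>auto simp: cube_def\<close>)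
  then show ?case by simp
next
  case (Suc t)
  have "elementary (k + Suc t) A (k + t) (butlast ` A) butlast"
    using elementary.delete_last[OF Suc.prems] by simp
  moreover have "butlast ` A \<subseteq> cube (k + t)" using Suc.prems by (auto simp: cube_def)
  ultimately have "composite_map (k + Suc t) A k ((take k \<circ> butlast) ` A) (take k \<circ> butlast)"
    using composite_map_image_comp[OF elementary_composite_map Suc.IH] by blast
  then show ?case
    by (rule composite_map_image_cong) (use Suc.prems in \<open>auto simp: cube_def take_butlast\<close>)
qed

lemma swap_blocks_permutes:
  fixes n m :: nat
  shows "(\<lambda>i. if i < m then i + n else if i < n + m then i - m else i) permutes {..<n + m}"
proof (rule bij_imp_permutes)
  show "bij_betw (\<lambda>i. if i < m then i + n else if i < n + m then i - m else i)
      {..<n + m} {..<n + m}"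
    by (rule bij_betw_byWitness[where f'="\<lambda>i. if i < n then i + m else if i < n + m then i - n else i"])
      auto
qed auto

lemma composite_map_swap_blocks:
  assumes A: "A \<subseteq> cube (n + m)"
  shows "composite_map (n + m) A (n + m) ((\<lambda>x. drop n x @ take n x) ` A) (\<lambda>x. drop n x @ take n x)"
proof -
  define \<sigma> where "\<sigma> = (\<lambda>i::nat. if i < m then i + n else if i < n + m then i - m else i)"
  let ?p = "\<lambda>x. map (\<lambda>i. x ! \<sigma> i) [0..<n + m]"
  have "composite_map (n + m) A (n + m) (?p ` A) ?p"
    by (rule elementary_composite_map, rule elementary.permute[OF A])
      (simp add: \<sigma>_def swap_blocks_permutes)
  moreover have "?p x = drop n x @ take n x" if "x \<in> A" for x
  proof (rule nth_equalityI)
    have len: "length x = n + m" using that A by (auto simp: cube_def)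
    fix i assume "i < length (?p x)"
    with len show "?p x ! i = (drop n x @ take n x) ! i"
      by (cases "i < m") (auto simp: \<sigma>_def nth_append add.commute)
  qed (use that A in \<open>auto simp: cube_def\<close>)
  ultimately show ?thesis by (rule composite_map_image_cong)
qed

lemma composite_map_lit_map:
  assumes C: "C \<subseteq> cube n" and D: "D \<subseteq> cube m"
    and s: "lits_below n m s" and into: "lit_map m s ` C \<subseteq> D"
  shows "composite_map n C m D (lit_map m s)"
proof -
  let ?w = "lit_map m s"
  let ?h = "\<lambda>a. a @ ?w a" and ?swap = "\<lambda>x. drop n x @ take n x"
  have hC: "?h ` C \<subseteq> cube (n + m)" using C by (auto simp: cube_def)
  have "composite_map n C (n + m) ((?swap \<circ> ?h) ` C) (?swap \<circ> ?h)"
    using composite_map_image_comp[OF composite_map_append_lits[OF C s]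
        composite_map_swap_blocks[OF hC]] .
  then have wC: "composite_map n C (n + m) ((\<lambda>a. ?w a @ a) ` C) (\<lambda>a. ?w a @ a)"
    by (rule composite_map_image_cong) (use C in \<open>auto simp: cube_def\<close>)
  have "(\<lambda>a. ?w a @ a) ` C \<subseteq> cube (m + n)" using C by (auto simp: cube_def)
  then have "composite_map (n + m) ((\<lambda>a. ?w a @ a) ` C) m (take m ` (\<lambda>a. ?w a @ a) ` C) (take m)"
    using composite_map_take[of _ m n] by (simp add: add.commute)
  from composite_map_image_comp[OF wC this]
  have "composite_map n C m (?w ` C) ?w"
    by (rule composite_map_image_cong) simp
  moreover have "composite_map m (?w ` C) m D id"
    using into D by (auto intro: elementary_composite_map elementary.inclusion)
  ultimately show ?thesis using composite_map_comp by fastforce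
qed

lemma composite_map_iff_lit_map_on:
  assumes "C \<subseteq> cube n" "D \<subseteq> cube m"
  shows "composite_map n C m D f \<longleftrightarrow> lit_map_on n m C f \<and> f ` C \<subseteq> D"
proof
  assume "composite_map n C m D f"
  then obtain g where g: "composite n C m D g" "\<forall>c\<in>C. g c = f c"
    by (auto simp: composite_map_def)
  from composite_lit_map_on[OF g(1)] obtain s
    where "lits_below n m s" "\<forall>c\<in>C. g c = lit_map m s c"
    by (auto simp: lit_map_on_def)
  moreover have "g ` C \<subseteq> D" using composite_codes[OF g(1)] by blast
  ultimately show "lit_map_on n m C f \<and> f ` C \<subseteq> D"
    using g(2) by (auto simp: lit_map_on_def)
next
  assume "lit_map_on n m C f \<and> f ` C \<subseteq> D"
  then obtain s where s: "lits_below n m s" "\<forall>a\<in>C. f a = lit_map m s a" and "f ` C \<subseteq> D"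
    by (auto simp: lit_map_on_def)
  then have "lit_map m s ` C \<subseteq> D" by auto
  from composite_map_lit_map[OF assms s(1) this] show "composite_map n C m D f"
    by (rule composite_map_cong) (use s(2) in simp)
qed

section \<open>Ring homomorphisms between code rings\<close>

lemma finite_subset_cube: "D \<subseteq> cube n \<Longrightarrow> finite D"
  unfolding cube_def using finite_list_length finite_subset by blast

lemma mem_carrier_code_ring: "f \<in> carrier (code_ring D) \<longleftrightarrow> (\<forall>x. f x \<longrightarrow> x \<in> D)"
  by (auto simp: code_ring_def)

definition pullback ::
    "bool list set \<Rightarrow> (bool list \<Rightarrow> bool list) \<Rightarrow> (bool list \<Rightarrow> bool) \<Rightarrow> bool list \<Rightarrow> bool" where
  "pullback C q f = (\<lambda>x. x \<in> C \<and> f (q x))"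

lemma pullback_ring_hom: "q ` C \<subseteq> D \<Longrightarrow> pullback C q \<in> ring_hom (code_ring D) (code_ring C)"
  by (auto simp: ring_hom_def code_ring_def pullback_def)

lemma pullback_act:
  "C \<subseteq> E \<Longrightarrow> (\<forall>c\<in>C. q c = p c) \<Longrightarrow>
   pullback C q (act r f) = act (pullback E p r) (pullback C q f)"
  by (auto simp: pullback_def act_def)

context
  fixes C D :: "bool list set" and \<phi> :: "(bool list \<Rightarrow> bool) \<Rightarrow> bool list \<Rightarrow> bool"
  assumes hom: "\<phi> \<in> ring_hom (code_ring D) (code_ring C)"
begin

lemma hom_vanishes: "f \<in> carrier (code_ring D) \<Longrightarrow> x \<notin> C \<Longrightarrow> \<not> \<phi> f x"
  using hom by (auto simp: ring_hom_def code_ring_def Pi_def)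

lemma hom_add:
  "f \<in> carrier (code_ring D) \<Longrightarrow> g \<in> carrier (code_ring D) \<Longrightarrow>
   \<phi> (\<lambda>x. f x \<noteq> g x) = (\<lambda>x. \<phi> f x \<noteq> \<phi> g x)"
  using hom by (auto simp: ring_hom_def code_ring_def)

lemma hom_mult:
  "f \<in> carrier (code_ring D) \<Longrightarrow> g \<in> carrier (code_ring D) \<Longrightarrow>
   \<phi> (\<lambda>x. f x \<and> g x) = (\<lambda>x. \<phi> f x \<and> \<phi> g x)"
  using hom by (auto simp: ring_hom_def code_ring_def)

lemma hom_one: "\<phi> (\<lambda>x. x \<in> D) = (\<lambda>x. x \<in> C)"
  using hom by (auto simp: ring_hom_def code_ring_def)

lemma hom_zero: "\<phi> (\<lambda>x. False) = (\<lambda>x. False)"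
  using hom_add[of "\<lambda>x. False" "\<lambda>x. False"] by (simp add: mem_carrier_code_ring)

lemma hom_disjoint:
  assumes "f \<in> carrier (code_ring D)" "g \<in> carrier (code_ring D)" "\<And>x. \<not> (f x \<and> g x)"
  shows "\<not> (\<phi> f c \<and> \<phi> g c)"
proof -
  have "(\<lambda>x. f x \<and> g x) = (\<lambda>x. False)" using assms(3) by blast
  then have "(\<lambda>x. \<phi> f x \<and> \<phi> g x) = (\<lambda>x. False)" using hom_mult[OF assms(1,2)] hom_zero by simp
  from fun_cong[OF this, of c] show ?thesis by simp
qed

lemma hom_indicator:
  "finite S \<Longrightarrow> S \<subseteq> D \<Longrightarrow> \<phi> (\<lambda>x. x \<in> S) c \<longleftrightarrow> (\<exists>d\<in>S. \<phi> (rho d) c)"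
proof (induction S rule: finite_induct)
  case empty
  then show ?case using hom_zero by simp
next
  case (insert d S)
  have S: "(\<lambda>x. x \<in> S) \<in> carrier (code_ring D)" and d: "rho d \<in> carrier (code_ring D)"
    using insert.prems by (auto simp: mem_carrier_code_ring rho_def)
  have "(\<lambda>x. x \<in> insert d S) = (\<lambda>x. (x \<in> S) \<noteq> rho d x)"
    using insert.hyps(2) by (auto simp: rho_def)
  then have "\<phi> (\<lambda>x. x \<in> insert d S) c \<longleftrightarrow> \<phi> (\<lambda>x. x \<in> S) c \<noteq> \<phi> (rho d) c"
    using hom_add[OF S d] by simp
  moreover have "\<not> (\<phi> (\<lambda>x. x \<in> S) c \<and> \<phi> (rho d) c)"
    by (rule hom_disjoint[OF S d]) (use insert.hyps(2) in \<open>auto simp: rho_def\<close>)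
  ultimately show ?case using insert by auto
qed

lemma hom_rho_unique:
  assumes "finite D" "c \<in> C"
  shows "\<exists>!d. d \<in> D \<and> \<phi> (rho d) c"
proof -
  have "\<exists>d\<in>D. \<phi> (rho d) c"
    using hom_indicator[OF assms(1) order_refl] hom_one assms(2) by simp
  moreover have "d = d'" if "d \<in> D" "d' \<in> D" "\<phi> (rho d) c" "\<phi> (rho d') c" for d d'
    using hom_disjoint[of "rho d" "rho d'" c] that
    by (auto simp: mem_carrier_code_ring rho_def)
  ultimately show ?thesis by blast
qed

lemma code_map_in: "finite D \<Longrightarrow> c \<in> C \<Longrightarrow> code_map D \<phi> c \<in> D"
  unfolding code_map_def by (rule conjunct1[OF theI'[OF hom_rho_unique]])

lemma hom_rho_code_map: "finite D \<Longrightarrow> c \<in> C \<Longrightarrow> \<phi> (rho (code_map D \<phi> c)) c"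
  unfolding code_map_def by (rule conjunct2[OF theI'[OF hom_rho_unique]])

lemma hom_eq_pullback:
  assumes D: "finite D" and f: "f \<in> carrier (code_ring D)"
  shows "\<phi> f = pullback C (code_map D \<phi>) f"
proof
  fix c
  show "\<phi> f c = pullback C (code_map D \<phi>) f c"
  proof (cases "c \<in> C")
    case True
    define S where "S = {d \<in> D. f d}"
    have S: "finite S" "S \<subseteq> D" using D by (auto simp: S_def)
    have "f = (\<lambda>x. x \<in> S)" using f by (auto simp: S_def mem_carrier_code_ring)
    then have "\<phi> f c \<longleftrightarrow> \<phi> (\<lambda>x. x \<in> S) c" by (simp only:)
    also have "\<dots> \<longleftrightarrow> (\<exists>d\<in>S. \<phi> (rho d) c)" by (rule hom_indicator[OF S])
    also have "\<dots> \<longleftrightarrow> f (code_map D \<phi> c)"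
      using hom_rho_unique[OF D True] code_map_in[OF D True] hom_rho_code_map[OF D True]
      by (auto simp: S_def)
    finally show ?thesis using True by (simp add: pullback_def)
  next
    case False
    then show ?thesis using hom_vanishes[OF f] by (simp add: pullback_def)
  qed
qed

end

section \<open>Neural ring homomorphisms\<close>

lemma linear_monomial_var_lit:
  assumes "linear_monomial m n \<tau>" "i < m"
  shows "\<exists>l. (\<forall>j. l = Inl j \<longrightarrow> j < n) \<and> (\<forall>x\<in>cube n. \<tau> (var m i) x = lit_val l x)"
proof -
  have "\<tau> (var m i) \<in> {var n j |j. j < n} \<union> {\<lambda>x. False, \<lambda>x. x \<in> cube n}"
    using assms by (simp add: linear_monomial_def code_ring_def)
  then consider j where "j < n" "\<tau> (var m i) = var n j"
    | "\<tau> (var m i) = (\<lambda>x. False)" | "\<tau> (var m i) = (\<lambda>x. x \<in> cube n)"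
    by blast
  then show ?thesis
  proof cases
    case (1 j)
    then show ?thesis by (auto simp: var_def lit_val_def intro!: exI[of _ "Inl j"])
  next
    case 2
    then show ?thesis by (auto simp: lit_val_def intro!: exI[of _ "Inr False"])
  next
    case 3
    then show ?thesis by (auto simp: lit_val_def intro!: exI[of _ "Inr True"])
  qed
qed

lemma compatible_var_code_map:
  assumes hom: "\<phi> \<in> ring_hom (code_ring D) (code_ring C)" and D: "D \<subseteq> cube m"
    and cp: "compatible m D C \<tau> \<phi>" and c: "c \<in> C" and i: "i < m"
  shows "\<tau> (var m i) c = code_map D \<phi> c ! i"
proof -
  let ?d = "code_map D \<phi> c"
  have fin: "finite D" using D by (rule finite_subset_cube)
  have d: "?d \<in> D" by (rule code_map_in[OF hom fin c])
  have r: "var m i \<in> carrier (poly_ring m)" by (simp add: code_ring_def var_def)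
  have f: "rho ?d \<in> carrier (code_ring D)" and af: "act (var m i) (rho ?d) \<in> carrier (code_ring D)"
    using d by (auto simp: mem_carrier_code_ring rho_def act_def)
  have "?d \<in> cube m" using d D by blast
  then have "\<phi> (act (var m i) (rho ?d)) c = ?d ! i"
    unfolding hom_eq_pullback[OF hom fin af] using c by (simp add: pullback_def act_def rho_def var_def)
  moreover have "\<phi> (act (var m i) (rho ?d)) c = act (\<tau> (var m i)) (\<phi> (rho ?d)) c"
    using cp r f by (simp add: compatible_def)
  ultimately show ?thesis using hom_rho_code_map[OF hom fin c] by (simp add: act_def)
qed

lemma pullback_lit_map_var:
  "i < m \<Longrightarrow> pullback (cube n) (lit_map m s) (var m i) = (\<lambda>x. x \<in> cube n \<and> lit_val (s i) x)"
  by (auto simp: pullback_def var_def cube_def)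

lemma linear_monomial_pullback_lit_map:
  assumes s: "lits_below n m s"
  shows "linear_monomial m n (pullback (cube n) (lit_map m s))"
  unfolding linear_monomial_def
proof (intro conjI allI impI)
  show "pullback (cube n) (lit_map m s) \<in> ring_hom (poly_ring m) (poly_ring n)"
    by (rule pullback_ring_hom) (auto simp: cube_def)
  fix i assume i: "i < m"
  show "pullback (cube n) (lit_map m s) (var m i)
      \<in> {var n j |j. j < n} \<union> {\<zero>\<^bsub>poly_ring n\<^esub>, \<one>\<^bsub>poly_ring n\<^esub>}"
  proof (cases "s i")
    case (Inl j)
    with s i have "j < n" by (auto simp: lits_below_def)
    moreover have "pullback (cube n) (lit_map m s) (var m i) = var n j"
      unfolding pullback_lit_map_var[OF i] using Inl by (simp add: var_def lit_val_def)
    ultimately show ?thesis by blast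
  next
    case (Inr b)
    with i show ?thesis by (cases b) (auto simp: pullback_lit_map_var lit_val_def code_ring_def)
  qed
qed

lemma neural_ring_hom_iff_lit_map_on:
  assumes C: "C \<subseteq> cube n" and D: "D \<subseteq> cube m"
    and hom: "\<phi> \<in> ring_hom (code_ring D) (code_ring C)"
  shows "neural_ring_hom n C m D \<phi> \<longleftrightarrow> lit_map_on n m C (code_map D \<phi>)"
proof
  assume "neural_ring_hom n C m D \<phi>"
  then obtain \<tau> where lm: "linear_monomial m n \<tau>" and cp: "compatible m D C \<tau> \<phi>"
    by (auto simp: neural_ring_hom_def)
  have "\<forall>i\<in>{..<m}. \<exists>l. (\<forall>j. l = Inl j \<longrightarrow> j < n) \<and> (\<forall>x\<in>cube n. \<tau> (var m i) x = lit_val l x)"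
    using linear_monomial_var_lit[OF lm] by blast
  from bchoice[OF this] obtain s where s: "\<forall>i\<in>{..<m}. (\<forall>j. s i = Inl j \<longrightarrow> j < n) \<and>
      (\<forall>x\<in>cube n. \<tau> (var m i) x = lit_val (s i) x)"
    by blast
  have "code_map D \<phi> c = lit_map m s c" if c: "c \<in> C" for c
  proof (rule nth_equalityI)
    have "code_map D \<phi> c \<in> D"
      using code_map_in[OF hom finite_subset_cube[OF D] c] .
    then show "length (code_map D \<phi> c) = length (lit_map m s c)"
      using D by (auto simp: cube_def)
    fix i assume "i < length (code_map D \<phi> c)"
    then have "i < m" using \<open>length (code_map D \<phi> c) = length (lit_map m s c)\<close> by simp
    then show "code_map D \<phi> c ! i = lit_map m s c ! i"
      using compatible_var_code_map[OF hom D cp c] s c C by auto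
  qed
  then show "lit_map_on n m C (code_map D \<phi>)"
    using s by (auto simp: lit_map_on_def lits_below_def)
next
  assume "lit_map_on n m C (code_map D \<phi>)"
  then obtain s where s: "lits_below n m s" "\<forall>c\<in>C. code_map D \<phi> c = lit_map m s c"
    by (auto simp: lit_map_on_def)
  let ?\<tau> = "pullback (cube n) (lit_map m s)"
  have fin: "finite D" using D by (rule finite_subset_cube)
  have "compatible m D C ?\<tau> \<phi>"
    unfolding compatible_def
  proof (intro ballI)
    fix r f assume f: "f \<in> carrier (code_ring D)"
    then have "act r f \<in> carrier (code_ring D)" by (auto simp: mem_carrier_code_ring act_def)
    then show "\<phi> (act r f) = act (?\<tau> r) (\<phi> f)"
      using hom_eq_pullback[OF hom fin] f pullback_act[OF C s(2)] by simp
  qed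
  with linear_monomial_pullback_lit_map[OF s(1)] hom show "neural_ring_hom n C m D \<phi>"
    by (auto simp: neural_ring_hom_def)
qed

theorem theorem4:
  fixes C D :: "bool list set" and n m :: nat
    and \<phi> :: "(bool list \<Rightarrow> bool) \<Rightarrow> (bool list \<Rightarrow> bool)"
  assumes "C \<subseteq> cube n" and "D \<subseteq> cube m"
    and "\<phi> \<in> ring_hom (code_ring D) (code_ring C)"
  shows "neural_ring_hom n C m D \<phi> \<longleftrightarrow>
           (\<exists>g. composite n C m D g \<and> (\<forall>c \<in> C. g c = code_map D \<phi> c))"
proof -
  have into: "code_map D \<phi> ` C \<subseteq> D"
    using code_map_in[OF assms(3) finite_subset_cube[OF assms(2)]] by blast
  have "neural_ring_hom n C m D \<phi> \<longleftrightarrow> lit_map_on n m C (code_map D \<phi>)"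
    by (rule neural_ring_hom_iff_lit_map_on[OF assms])
  also have "\<dots> \<longleftrightarrow> composite_map n C m D (code_map D \<phi>)"
    using composite_map_iff_lit_map_on[OF assms(1,2)] into by blast
  finally show ?thesis by (simp only: composite_map_def)
qed

end
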